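(* Let $X\subseteq\{0,1\}^n$ be a nonempty set and let $U=\{c_1,\dots,c_m\}\subseteq\mathbb{R}^{n+1}$ be a finite set of scenarios, $c_j=(\tilde c_j,\bar c_j)$ with $\tilde c_j\in\mathbb{R}$, $\bar c_j\in\mathbb{R}^n$, and $f(x)=\max_{j=1,\dots,m}\,\bar c_j^\top x+\tilde c_j$. Assume that all scenarios are perturbed by a continuously distributed random vector in $\mathbb{R}^{m(n+1)}$ with full-dimensional support (i.e. all $m(n+1)$ entries $\tilde c_j,\bar c_j$ are replaced by their perturbed values). Then, with probability one, in each iteration $k$ of Algorithm SD (described in the context) the set $\partial f(x^k)\cap(-\mathcal{N}_{\operatorname{conv}(V^k)}(x^k))$ is a singleton.
   Context: For a convex function $f$, $\partial f(x)$ denotes its subdifferential at $x$. For a convex set $C$ and $x\in C$, $\mathcal{N}_C(x)=\{d\in\mathbb{R}^n: d^\top(y-x)\le 0\ \forall y\in C\}$ is the normal cone of $C$ at $x$. Algorithm SD: pick any $\hat x^0\in X$ and set $V^1=\{\hat x^0\}$. For $k=1,2,\dots$: compute $\alpha^k\in\mathbb{R}^{V^k}_+$ with $\sum_{v\in V^k}\alpha^k_v=1$, the point $x^k=\sum_{v\in V^k}\alpha^k_v v$ minimizing $f$ over $\operatorname{conv}(V^k)$, and a vector $c^k\in\partial f(x^k)\cap(-\mathcal{N}_{\operatorname{conv}(V^k)}(x^k))$ (in this finite case, $(x^k,\alpha^k)$ together with $z^k=f(x^k)$ is obtained as a basic optimal solution of the linear program $\min\{z:\ \bar c_j^\top x+\tilde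 c_j\le z\ (j=1,\dots,m),\ x=\sum_{v\in V^k}\alpha_v v,\ \alpha\ge 0,\ \sum_{v\in V^k}\alpha_v=1\}$); then compute a minimizer $\hat x^k$ of $\min_{x\in X}(c^k)^\top x$. If $(c^k)^\top\hat x^k\ge (c^k)^\top x^k$, stop and output $x^k$; otherwise set $V^{k+1}:=V^k\cup\{\hat x^k\}$ and continue. *)

theory Defs
  imports "HOL-Probability.Probability"
begin

text \<open>Scenario data: a pair (ct, cb) with ct $ j = tilde c_j and cb $ j = bar c_j.\<close>

definition maxfun :: "real^'m::finite \<Rightarrow> real^'n::finite^'m \<Rightarrow> real^'n \<Rightarrow> real" where
  "maxfun ct cb x = Max ((\<lambda>j. cb $ j \<bullet> x + ct $ j) ` UNIV)"

definition subdiff :: "(real^'n::finite \<Rightarrow> real) \<Rightarrow> real^'n \<Rightarrow> (real^'n) set" where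
  "subdiff f x = {g. \<forall>y. f y \<ge> f x + g \<bullet> (y - x)}"

definition normal_cone :: "(real^'n::finite) set \<Rightarrow> real^'n \<Rightarrow> (real^'n) set" where
  "normal_cone C x = {d. \<forall>y\<in>C. d \<bullet> (y - x) \<le> 0}"

definition sd_set :: "real^'m::finite \<Rightarrow> real^'n::finite^'m \<Rightarrow> (real^'n) set \<Rightarrow> real^'n \<Rightarrow> (real^'n) set" where
  "sd_set ct cb V x = subdiff (maxfun ct cb) x \<inter> uminus ` normal_cone (convex hull V) x"

text \<open>A (finite prefix of a) run of Algorithm SD with iterations 1..N:
  V k = V^k, x k = x^k, c k = c^k, xh k = hat x^k (xh 0 = hat x^0).
  For k < N the stopping test failed, so the algorithm continued.\<close>
definition sd_run ::
  "real^'m::finite \<Rightarrow> real^'n::finite^'m \<Rightarrow> (real^'n) set \<Rightarrow> nat \<Rightarrow>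
   (nat \<Rightarrow> (real^'n) set) \<Rightarrow> (nat \<Rightarrow> real^'n) \<Rightarrow> (nat \<Rightarrow> real^'n) \<Rightarrow> (nat \<Rightarrow> real^'n) \<Rightarrow> bool" where
  "sd_run ct cb X N V x c xh \<longleftrightarrow>
     xh 0 \<in> X \<and> V 1 = {xh 0} \<and>
     (\<forall>k\<in>{1..N}.
        x k \<in> convex hull (V k) \<and> (\<forall>y\<in>convex hull (V k). maxfun ct cb (x k) \<le> maxfun ct cb y) \<and>
        c k \<in> sd_set ct cb (V k) (x k) \<and>
        xh k \<in> X \<and> (\<forall>y\<in>X. c k \<bullet> xh k \<le> c k \<bullet> y)) \<and>
     (\<forall>k\<in>{1..<N}. c k \<bullet> xh k < c k \<bullet> x k \<and> V (Suc k) = insert (xh k) (V k))"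

end

theory Submission
  imports Defs
begin

(* The set in question always contains c^k, so only uniqueness is at stake.  Write x^k as a
   strictly positive convex combination of an affinely independent set T of visited vertices.
   Every element g of the set is a convex combination of the slopes of the scenarios active at x^k,
   and, since -g is normal to conv V^k at a relative interior point of conv T, g is orthogonal to
   the direction space of aff T.  Hence two different elements yield either more than |T| scenarios
   that tie at a point of aff T, or, with at most |T| active scenarios, an affine dependence among
   their slopes projected onto the direction space of aff T.  For each of the finitely many
   configurations (T a set of 0/1 vectors, index sets of scenarios) both events are covered by the
   image of a hyperplane under a differentiable self-map of the scenario space, so they are
   Lebesgue null; an absolutely continuous perturbation avoids them almost surely. *)

section \<open>Negligible sets\<close>

lemma differentiable_vec_lambda:
  fixes F :: "'k::finite \<Rightarrow> 'a::real_normed_vector \<Rightarrow> 'b::euclidean_space"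
  assumes "\<And>j. F j differentiable (at z within S)"
  shows "(\<lambda>z. \<chi> j. F j z) differentiable (at z within S)"
proof -
  have "(\<lambda>z. \<chi> j. F j z) = (\<lambda>z. \<Sum>j\<in>UNIV. axis j (F j z))"
    by (auto simp: vec_eq_iff sum_component axis_def if_distrib cong: if_cong)
  moreover have "(\<lambda>z. axis j (F j z)) differentiable (at z within S)" for j
  proof -
    have "linear (axis j :: 'b \<Rightarrow> 'b^'k)"
      by (rule linearI) (auto simp: axis_def vec_eq_iff)
    then have "bounded_linear (axis j :: 'b \<Rightarrow> 'b^'k)"
      by (simp add: linear_conv_bounded_linear)
    then show ?thesis
      using differentiable_chain_within[OF assms bounded_linear_imp_differentiable]
      by (simp add: o_def)
  qed
  ultimately show ?thesis
    by (simp add: differentiable_sum)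
qed

lemma differentiable_fst_nth: "(\<lambda>z. fst z $ j) differentiable (at z within S)"
  by (intro bounded_linear_imp_differentiable bounded_linear_compose[OF bounded_linear_vec_nth]
      bounded_linear_fst)

lemma differentiable_snd_nth: "(\<lambda>z. snd z $ j) differentiable (at z within S)"
  by (intro bounded_linear_imp_differentiable bounded_linear_compose[OF bounded_linear_vec_nth]
      bounded_linear_snd)

lemma negligible_subset_differentiable_image_hyperplane:
  fixes \<Phi> :: "'a::euclidean_space \<Rightarrow> 'a"
  assumes "a \<noteq> 0" "\<Phi> differentiable_on {z. a \<bullet> z = b}" "S \<subseteq> \<Phi> ` {z. a \<bullet> z = b}"
  shows "negligible S"
  using negligible_differentiable_image_negligible[OF order_refl negligible_hyperplane assms(2)]
    assms(1,3) negligible_subset by blast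

lemma AE_translate_not_in_negligible:
  fixes N :: "'a::euclidean_space set"
  assumes "absolutely_continuous lborel P" "negligible N"
  shows "AE y in P. c + y \<notin> N"
proof -
  have "(+) (- c) ` N \<in> null_sets lebesgue"
    using negligible_translation[OF assms(2)] unfolding negligible_iff_null_sets .
  then obtain N' where "N' \<in> null_sets lborel" "(+) (- c) ` N \<subseteq> N'"
    by (auto simp: null_sets_completion_iff2)
  moreover have "{y \<in> space P. \<not> c + y \<notin> N} \<subseteq> (+) (- c) ` N"
    by (auto intro: rev_image_eqI)
  ultimately show ?thesis
    using assms(1) by (intro AE_I'[of N']) (auto simp: absolutely_continuous_def)
qed

section \<open>Convex geometry\<close>

lemma convex_hull_affine_independent_representation:
  fixes V :: "'a::euclidean_space set"
  assumes "finite V" "x \<in> convex hull V"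
  obtains T u where "T \<subseteq> V" "\<not> affine_dependent T" "\<forall>y\<in>T. 0 < u y" "sum u T = 1"
    "(\<Sum>y\<in>T. u y *\<^sub>R y) = x"
proof -
  obtain T where T: "T \<subseteq> V" "x \<in> convex hull T"
    and minimal: "\<And>T'. T' \<subseteq> V \<Longrightarrow> x \<in> convex hull T' \<Longrightarrow> card T \<le> card T'"
    using ex_has_least_nat[of "\<lambda>T. T \<subseteq> V \<and> x \<in> convex hull T" V card] assms(2)
    by (metis order_refl)
  have "finite T"
    using T(1) assms(1) finite_subset by blast
  obtain S where "S \<subseteq> T" "card S \<le> aff_dim T + 1" "x \<in> convex hull S"
    using T(2) caratheodory_aff_dim[of T] by blast
  moreover have "card T \<le> card S"
    using minimal \<open>S \<subseteq> T\<close> T(1) \<open>x \<in> convex hull S\<close> by blast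
  ultimately have "int (card T) \<le> aff_dim T + 1"
    by linarith
  then have indep: "\<not> affine_dependent T"
    using aff_dim_le_card[OF \<open>finite T\<close>] \<open>finite T\<close> by (simp add: affine_independent_iff_card)
  obtain u where u: "\<forall>y\<in>T. 0 \<le> u y" "sum u T = 1" "(\<Sum>y\<in>T. u y *\<^sub>R y) = x"
    using T(2) convex_hull_finite[OF \<open>finite T\<close>] by blast
  have "0 < u y" if "y \<in> T" for y
  proof (rule ccontr)
    assume "\<not> 0 < u y"
    with u(1) that have "u y = 0" by force
    then have "x \<in> convex hull (T - {y})"
      using u that \<open>finite T\<close>
      by (auto simp: convex_hull_finite sum_diff1 intro!: exI[of _ u])
    then have "card T \<le> card (T - {y})"
      using minimal T(1) by blast
    moreover have "card (T - {y}) < card T"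
      using card_Diff1_less[OF \<open>finite T\<close> that] .
    ultimately show False
      by simp
  qed
  with T(1) indep u(2,3) show thesis
    using that by blast
qed

lemma convex_hull_image_weights:
  fixes f :: "'i \<Rightarrow> 'a::real_vector"
  assumes "finite A" "g \<in> convex hull (f ` A)"
  obtains l where "\<forall>j\<in>A. 0 \<le> l j" "sum l A = 1" "(\<Sum>j\<in>A. l j *\<^sub>R f j) = g"
proof -
  obtain u where u: "\<forall>p\<in>f ` A. 0 \<le> u p" "sum u (f ` A) = 1" "(\<Sum>p\<in>f ` A. u p *\<^sub>R p) = g"
    using assms convex_hull_finite[of "f ` A"] by auto
  define l where "l j = u (f j) / card {i\<in>A. f i = f j}" for j
  have fibre: "(\<Sum>j\<in>{i\<in>A. f i = p}. l j) = u p" if "p \<in> f ` A" for p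
  proof -
    have "card {i\<in>A. f i = p} > 0"
      using that assms(1) by (auto simp: card_gt_0_iff)
    then show ?thesis
      by (simp add: l_def)
  qed
  have "sum l A = (\<Sum>p\<in>f ` A. \<Sum>j\<in>{i\<in>A. f i = p}. l j)"
    by (rule sum.image_gen[OF assms(1)])
  also have "\<dots> = 1"
    using fibre u(2) by simp
  finally have sum_l: "sum l A = 1" .
  have "(\<Sum>j\<in>A. l j *\<^sub>R f j) = (\<Sum>p\<in>f ` A. \<Sum>j\<in>{i\<in>A. f i = p}. l j *\<^sub>R f j)"
    by (rule sum.image_gen[OF assms(1)])
  also have "\<dots> = (\<Sum>p\<in>f ` A. (\<Sum>j\<in>{i\<in>A. f i = p}. l j) *\<^sub>R p)"
    by (intro sum.cong refl) (simp add: scaleR_sum_left)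
  also have "\<dots> = g"
    using fibre u(3) by simp
  finally have "(\<Sum>j\<in>A. l j *\<^sub>R f j) = g" .
  moreover have "\<forall>j\<in>A. 0 \<le> l j"
    using u(1) by (simp add: l_def)
  ultimately show thesis
    using that sum_l by blast
qed

lemma normal_cone_orthogonal_positive_combination:
  assumes "d \<in> normal_cone C x" "T \<subseteq> C" "finite T" "\<forall>y\<in>T. 0 < u y" "sum u T = 1"
    "(\<Sum>y\<in>T. u y *\<^sub>R y) = x" "y \<in> T"
  shows "d \<bullet> (y - x) = 0"
proof -
  have "(\<Sum>z\<in>T. u z * (d \<bullet> (x - z))) = d \<bullet> (\<Sum>z\<in>T. u z *\<^sub>R (x - z))"
    by (simp add: inner_sum_right)
  also have "\<dots> = d \<bullet> ((\<Sum>z\<in>T. u z *\<^sub>R x) - (\<Sum>z\<in>T. u z *\<^sub>R z))"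
    by (simp add: scaleR_diff_right sum_subtractf)
  also have "\<dots> = 0"
    using assms(5,6) by (simp add: scaleR_sum_left[symmetric])
  finally have sum0: "(\<Sum>z\<in>T. u z * (d \<bullet> (x - z))) = 0" .
  have nonneg: "0 \<le> u z * (d \<bullet> (x - z))" if "z \<in> T" for z
    using assms(1,2,4) that by (fastforce simp: normal_cone_def inner_diff_right)
  have "\<forall>z\<in>T. u z * (d \<bullet> (x - z)) = 0"
    using sum_nonneg_eq_0_iff[OF assms(3) nonneg] sum0 by simp
  then show ?thesis
    using assms(4,7) by (fastforce simp: inner_diff_right)
qed

section \<open>Subgradients of a maximum of affine functions\<close>

definition active_scenarios :: "real^'m::finite \<Rightarrow> real^'n::finite^'m \<Rightarrow> real^'n \<Rightarrow> 'm set" where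
  "active_scenarios ct cb x = {j. cb $ j \<bullet> x + ct $ j = maxfun ct cb x}"

lemma maxfun_ge: "cb $ j \<bullet> x + ct $ j \<le> maxfun ct cb x"
  unfolding maxfun_def by (rule Max_ge) auto

lemma maxfun_less_along_direction:
  assumes "\<And>j. j \<in> active_scenarios ct cb x \<Longrightarrow> cb $ j \<bullet> w < s"
  obtains t where "t > 0" "maxfun ct cb (x + t *\<^sub>R w) < maxfun ct cb x + t * s"
proof -
  let ?M = "maxfun ct cb x"
  let ?gap = "\<lambda>j t. cb $ j \<bullet> (x + t *\<^sub>R w) + ct $ j - (?M + t * s)"
  have "\<forall>\<^sub>F t in at_right 0. ?gap j t < 0" for j
  proof (cases "j \<in> active_scenarios ct cb x")
    case True
    then have "cb $ j \<bullet> x + ct $ j = ?M"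
      by (simp add: active_scenarios_def)
    then have "?gap j t = t * (cb $ j \<bullet> w - s)" for t
      unfolding inner_add_right inner_scaleR_right right_diff_distrib by linarith
    then have "?gap j t < 0" if "t > 0" for t
      using assms[OF True] that by (simp add: mult_pos_neg)
    then show ?thesis
      by (rule eventually_mono[OF eventually_at_right_less])
  next
    case False
    have "(?gap j \<longlongrightarrow> ?gap j 0) (at_right 0)"
      by (intro tendsto_intros)
    moreover have "?gap j 0 < 0"
      using False maxfun_ge[of cb j x ct] by (simp add: active_scenarios_def)
    ultimately show ?thesis
      by (rule order_tendstoD(2))
  qed
  then have "\<forall>\<^sub>F t in at_right 0. t > 0 \<and> (\<forall>j. ?gap j t < 0)"
    by (intro eventually_conj eventually_all_finite eventually_at_right_less) simp
  then obtain t where t: "t > 0" "\<forall>j. ?gap j t < 0"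
    by (auto dest: eventually_happens)
  then have "maxfun ct cb (x + t *\<^sub>R w) < ?M + t * s"
    unfolding maxfun_def[of ct cb "x + t *\<^sub>R w"] by (subst Max_less_iff) auto
  with t(1) show thesis
    by (rule that)
qed

lemma subdiff_maxfun_subset:
  "subdiff (maxfun ct cb) x \<subseteq> convex hull ((\<lambda>j. cb $ j) ` active_scenarios ct cb x)"
proof
  fix g
  assume g: "g \<in> subdiff (maxfun ct cb) x"
  let ?S = "convex hull ((\<lambda>j. cb $ j) ` active_scenarios ct cb x)"
  show "g \<in> ?S"
  proof (rule ccontr)
    assume "g \<notin> ?S"
    moreover have "closed ?S"
      by (simp add: compact_imp_closed compact_convex_hull finite_imp_compact)
    ultimately obtain a b where ab: "a \<bullet> g < b" "\<forall>p\<in>?S. b < a \<bullet> p"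
      using separating_hyperplane_closed_point[OF convex_convex_hull] by blast
    have "cb $ j \<bullet> (- a) < g \<bullet> (- a)" if "j \<in> active_scenarios ct cb x" for j
    proof -
      have "cb $ j \<in> ?S"
        using that by (intro hull_inc imageI)
      with ab(2) have "b < a \<bullet> cb $ j"
        by blast
      with ab(1) show ?thesis
        by (simp add: inner_commute)
    qed
    then obtain t where "t > 0" "maxfun ct cb (x + t *\<^sub>R (- a)) < maxfun ct cb x + t * (g \<bullet> (- a))"
      by (rule maxfun_less_along_direction)
    moreover have "maxfun ct cb x + g \<bullet> ((x + t *\<^sub>R (- a)) - x) \<le> maxfun ct cb (x + t *\<^sub>R (- a))"
      using g unfolding subdiff_def mem_Collect_eq by (rule spec)
    ultimately show False
      by simp
  qed
qed

section \<open>Degenerate scenarios\<close>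

definition scenarios_tie_on_affine_hull ::
    "(real^'n::finite) set \<Rightarrow> 'm::finite set \<Rightarrow> 'm \<Rightarrow> ((real^'m) \<times> (real^'n^'m)) set" where
  "scenarios_tie_on_affine_hull T I j0 =
     {(ct, cb). \<exists>x\<in>affine hull T. \<forall>i\<in>I. cb $ i \<bullet> x + ct $ i = cb $ j0 \<bullet> x + ct $ j0}"

text \<open>On the hyperplane where the entries ct $ \<iota> y sum to 1 they serve as affine coordinates of
  the tie point; the chart overwrites them by the values that the tie forces.\<close>

definition tie_chart ::
    "(real^'n::finite) set \<Rightarrow> (real^'n \<Rightarrow> 'm::finite) \<Rightarrow> 'm \<Rightarrow>
     (real^'m) \<times> (real^'n^'m) \<Rightarrow> (real^'m) \<times> (real^'n^'m)" where
  "tie_chart T \<iota> j0 z =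
     ((\<chi> j. if j \<in> \<iota> ` T
            then fst z $ j0 + (snd z $ j0 - snd z $ j) \<bullet> (\<Sum>y\<in>T. fst z $ \<iota> y *\<^sub>R y)
            else fst z $ j), snd z)"

lemma differentiable_tie_chart:
  assumes "finite T"
  shows "tie_chart T \<iota> j0 differentiable_on S"
proof -
  have "(\<lambda>z. if j \<in> \<iota> ` T
             then fst z $ j0 + (snd z $ j0 - snd z $ j) \<bullet> (\<Sum>y\<in>T. fst z $ \<iota> y *\<^sub>R y)
             else fst z $ j) differentiable (at z within S)" for j z
    using assms by (cases "j \<in> \<iota> ` T")
      (auto intro!: differentiable_add differentiable_diff differentiable_inner differentiable_sum
        differentiable_scaleR differentiable_fst_nth differentiable_snd_nth)
  then show ?thesis
    unfolding differentiable_on_def tie_chart_def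
    by (auto intro!: differentiable_Pair differentiable_vec_lambda
        bounded_linear_imp_differentiable[OF bounded_linear_snd])
qed

lemma scenarios_tie_on_affine_hull_subset_tie_chart_image:
  assumes "finite T" "inj_on \<iota> T" "\<iota> ` T \<subseteq> I" "j0 \<notin> I"
  shows "scenarios_tie_on_affine_hull T I j0 \<subseteq> tie_chart T \<iota> j0 ` {z. (\<Sum>y\<in>T. fst z $ \<iota> y) = 1}"
proof
  fix z
  assume "z \<in> scenarios_tie_on_affine_hull T I j0"
  then obtain \<mu> where \<mu>: "sum \<mu> T = 1"
    and tie: "\<And>i. i \<in> I \<Longrightarrow> snd z $ i \<bullet> (\<Sum>y\<in>T. \<mu> y *\<^sub>R y) + fst z $ i
                             = snd z $ j0 \<bullet> (\<Sum>y\<in>T. \<mu> y *\<^sub>R y) + fst z $ j0"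
    by (auto simp: scenarios_tie_on_affine_hull_def affine_hull_finite[OF assms(1)])
  define s :: "real^_" where "s = (\<chi> j. if j \<in> \<iota> ` T then \<mu> (the_inv_into T \<iota> j) else fst z $ j)"
  have s_\<iota>: "s $ \<iota> y = \<mu> y" if "y \<in> T" for y
    using that assms(2) by (simp add: s_def the_inv_into_f_f)
  have "fst (tie_chart T \<iota> j0 (s, snd z)) $ j = fst z $ j" for j
    using tie[of j] assms(3,4) s_\<iota> by (auto simp: tie_chart_def s_def inner_diff_left cong: sum.cong)
  then have "tie_chart T \<iota> j0 (s, snd z) = z"
    by (simp add: tie_chart_def prod_eq_iff vec_eq_iff)
  moreover have "(\<Sum>y\<in>T. s $ \<iota> y) = 1"
    using s_\<iota> \<mu> by simp
  ultimately show "z \<in> tie_chart T \<iota> j0 ` {z. (\<Sum>y\<in>T. fst z $ \<iota> y) = 1}"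
    by (intro rev_image_eqI[of "(s, snd z)"]) auto
qed

lemma negligible_scenarios_tie_on_affine_hull:
  fixes T :: "(real^'n::finite) set" and I :: "'m::finite set"
  assumes "finite T" "card T \<le> card I" "j0 \<notin> I"
  shows "negligible (scenarios_tie_on_affine_hull T I j0)"
proof (cases "T = {}")
  case True
  then show ?thesis
    by (simp add: scenarios_tie_on_affine_hull_def)
next
  case False
  obtain \<iota> where \<iota>: "\<iota> ` T \<subseteq> I" "inj_on \<iota> T"
    using card_le_inj[OF assms(1) _ assms(2)] by auto
  define a :: "(real^'m) \<times> (real^'n^'m)" where "a = (\<Sum>y\<in>T. axis (\<iota> y) 1, 0)"
  have a_inner: "a \<bullet> z = (\<Sum>y\<in>T. fst z $ \<iota> y)" for z
    by (simp add: a_def inner_prod_def inner_sum_left inner_axis')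
  then have "a \<bullet> (1, 0) = card T"
    by simp
  then have "a \<noteq> 0"
    using False assms(1) by auto
  moreover have "tie_chart T \<iota> j0 differentiable_on {z. a \<bullet> z = 1}"
    by (rule differentiable_tie_chart[OF assms(1)])
  moreover have "scenarios_tie_on_affine_hull T I j0 \<subseteq> tie_chart T \<iota> j0 ` {z. a \<bullet> z = 1}"
    using scenarios_tie_on_affine_hull_subset_tie_chart_image[OF assms(1) \<iota>(2,1) assms(3)]
    by (simp add: a_inner)
  ultimately show ?thesis
    by (rule negligible_subset_differentiable_image_hyperplane)
qed

lemma affine_independent_orthonormal_directions:
  fixes T :: "'a::euclidean_space set" and A :: "'i set"
  assumes "\<not> affine_dependent T" "y0 \<in> T" "finite A" "card A < card T"
  obtains \<kappa> :: "'i \<Rightarrow> 'a"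
  where "\<And>j k. j \<in> A \<Longrightarrow> k \<in> A \<Longrightarrow> \<kappa> j \<bullet> \<kappa> k = (if j = k then 1 else 0)"
    and "\<And>u k. (\<And>y. y \<in> T \<Longrightarrow> u \<bullet> (y - y0) = 0) \<Longrightarrow> k \<in> A \<Longrightarrow> u \<bullet> \<kappa> k = 0"
proof -
  let ?D = "span ((\<lambda>y. y - y0) ` T)"
  obtain B where B: "B \<subseteq> ?D" "pairwise orthogonal B" "\<And>b. b \<in> B \<Longrightarrow> norm b = 1"
    "independent B" "card B = dim ?D"
    by (metis orthonormal_basis_subspace subspace_span)
  have "int (dim ?D) = int (card T) - 1"
    using aff_dim_eq_dim_subtract[OF hull_inc[OF assms(2)]] assms(1)
    by (simp add: affine_independent_iff_card)
  then have "card A \<le> card B"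
    using assms(4) B(5) by linarith
  then obtain \<kappa> where \<kappa>: "\<kappa> ` A \<subseteq> B" "inj_on \<kappa> A"
    using card_le_inj[OF assms(3) independent_imp_finite[OF B(4)]] by auto
  show thesis
  proof
    fix j k
    assume jk: "j \<in> A" "k \<in> A"
    then have "\<kappa> j \<in> B" "\<kappa> k \<in> B"
      using \<kappa>(1) by auto
    moreover have "\<kappa> j \<noteq> \<kappa> k" if "j \<noteq> k"
      using \<kappa>(2) jk that by (auto simp: inj_on_def)
    ultimately show "\<kappa> j \<bullet> \<kappa> k = (if j = k then 1 else 0)"
      using B(2,3) by (auto simp: pairwise_def orthogonal_def norm_eq_1)
  next
    fix u k
    assume u: "\<And>y. y \<in> T \<Longrightarrow> u \<bullet> (y - y0) = 0" and "k \<in> A"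
    then have "\<kappa> k \<in> ?D"
      using \<kappa>(1) B(1) by blast
    then have "orthogonal u (\<kappa> k)"
      by (rule orthogonal_to_span) (use u in \<open>auto simp: orthogonal_def\<close>)
    then show "u \<bullet> \<kappa> k = 0"
      by (simp add: orthogonal_def)
  qed
qed

definition projected_slopes_dependent ::
    "(real^'n::finite) set \<Rightarrow> 'm::finite set \<Rightarrow> 'm \<Rightarrow> ((real^'m) \<times> (real^'n^'m)) set" where
  "projected_slopes_dependent T A j1 =
     {(ct, cb). \<exists>\<theta>. \<theta> j1 \<noteq> 0 \<and> sum \<theta> A = 0 \<and>
        (\<forall>y\<in>T. \<forall>y'\<in>T. (\<Sum>j\<in>A. \<theta> j *\<^sub>R cb $ j) \<bullet> (y - y') = 0)}"

lemma projected_slopes_dependent_normalized: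
  fixes A :: "'m::finite set"
  assumes "(ct, cb) \<in> projected_slopes_dependent T A j1" "j1 \<in> A"
  obtains l where "sum l (A - {j1}) = 1"
    "\<And>y y'. y \<in> T \<Longrightarrow> y' \<in> T \<Longrightarrow> (cb $ j1 - (\<Sum>k\<in>A - {j1}. l k *\<^sub>R cb $ k)) \<bullet> (y - y') = 0"
proof -
  obtain \<theta> where \<theta>: "\<theta> j1 \<noteq> 0" "sum \<theta> A = 0"
    and orth: "\<And>y y'. y \<in> T \<Longrightarrow> y' \<in> T \<Longrightarrow> (\<Sum>j\<in>A. \<theta> j *\<^sub>R cb $ j) \<bullet> (y - y') = 0"
    using assms(1) by (auto simp: projected_slopes_dependent_def)
  define l where "l k = - \<theta> k / \<theta> j1" for k
  have split: "sum f A = f j1 + sum f (A - {j1})" for f :: "'m \<Rightarrow> 'b::comm_monoid_add"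
    using assms(2) by (simp add: sum.remove)
  have "sum \<theta> (A - {j1}) = - \<theta> j1"
    using \<theta>(2) split[of \<theta>] by simp
  then have "sum l (A - {j1}) = 1"
    using \<theta>(1) by (simp add: l_def sum_negf flip: sum_divide_distrib)
  moreover have "cb $ j1 - (\<Sum>k\<in>A - {j1}. l k *\<^sub>R cb $ k) = (1 / \<theta> j1) *\<^sub>R (\<Sum>j\<in>A. \<theta> j *\<^sub>R cb $ j)"
    using \<theta>(1) split[of "\<lambda>j. \<theta> j *\<^sub>R cb $ j"]
    by (simp add: l_def scaleR_right_distrib scaleR_sum_right sum_negf)
  ultimately show thesis
    using that orth by simp
qed

lemma projected_slopes_dependent_reparametrized:
  fixes \<kappa> :: "'m::finite \<Rightarrow> real^'n::finite"
  assumes "(ct, cb) \<in> projected_slopes_dependent T A j1" "j1 \<in> A" "y0 \<in> T"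
    and orthonormal: "\<And>j k. j \<in> A - {j1} \<Longrightarrow> k \<in> A - {j1} \<Longrightarrow> \<kappa> j \<bullet> \<kappa> k = (if j = k then 1 else 0)"
    and normal: "\<And>u k. (\<And>y. y \<in> T \<Longrightarrow> u \<bullet> (y - y0) = 0) \<Longrightarrow> k \<in> A - {j1} \<Longrightarrow> u \<bullet> \<kappa> k = 0"
  obtains v where "(\<Sum>k\<in>A - {j1}. \<kappa> k) \<bullet> v = 1"
    "v + (\<Sum>k\<in>A - {j1}. (v \<bullet> \<kappa> k) *\<^sub>R (cb $ k - \<kappa> k)) = cb $ j1"
proof -
  obtain l where l: "sum l (A - {j1}) = 1"
    and orth: "\<And>y y'. y \<in> T \<Longrightarrow> y' \<in> T \<Longrightarrow> (cb $ j1 - (\<Sum>k\<in>A - {j1}. l k *\<^sub>R cb $ k)) \<bullet> (y - y') = 0"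
    using projected_slopes_dependent_normalized[OF assms(1,2)] by blast
  define u where "u = cb $ j1 - (\<Sum>k\<in>A - {j1}. l k *\<^sub>R cb $ k)"
  define v where "v = u + (\<Sum>k\<in>A - {j1}. l k *\<^sub>R \<kappa> k)"
  have u_normal: "u \<bullet> \<kappa> k = 0" if "k \<in> A - {j1}" for k
    using normal[OF orth[OF _ assms(3)] that] by (simp add: u_def)
  have coord: "v \<bullet> \<kappa> k = l k" if "k \<in> A - {j1}" for k
  proof -
    have "(\<Sum>k'\<in>A - {j1}. l k' * (\<kappa> k' \<bullet> \<kappa> k)) = (\<Sum>k'\<in>A - {j1}. if k' = k then l k' else 0)"
      using that orthonormal by (intro sum.cong) auto
    then show ?thesis
      using that u_normal by (simp add: v_def inner_add_left inner_sum_left)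
  qed
  show thesis
  proof
    have "(\<Sum>k\<in>A - {j1}. \<kappa> k) \<bullet> v = (\<Sum>k\<in>A - {j1}. v \<bullet> \<kappa> k)"
      by (simp add: inner_sum_right inner_commute)
    then show "(\<Sum>k\<in>A - {j1}. \<kappa> k) \<bullet> v = 1"
      using coord l by simp
    have "(\<Sum>k\<in>A - {j1}. (v \<bullet> \<kappa> k) *\<^sub>R (cb $ k - \<kappa> k)) = (\<Sum>k\<in>A - {j1}. l k *\<^sub>R (cb $ k - \<kappa> k))"
      using coord by (auto intro: sum.cong)
    then show "v + (\<Sum>k\<in>A - {j1}. (v \<bullet> \<kappa> k) *\<^sub>R (cb $ k - \<kappa> k)) = cb $ j1"
      by (simp add: v_def u_def scaleR_diff_right sum_subtractf)
  qed
qed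

text \<open>On the hyperplane where (\<Sum>k. \<kappa> k) \<bullet> cb $ j1 = 1 the coordinates of cb $ j1 along the
  orthonormal directions \<kappa> k sum to 1; the chart uses them as affine weights and moves each
  direction \<kappa> k onto the slope cb $ k.\<close>

definition slope_chart ::
    "'m::finite set \<Rightarrow> 'm \<Rightarrow> ('m \<Rightarrow> real^'n::finite) \<Rightarrow>
     (real^'m) \<times> (real^'n^'m) \<Rightarrow> (real^'m) \<times> (real^'n^'m)" where
  "slope_chart A j1 \<kappa> z =
     (fst z, \<chi> j. if j = j1
                 then snd z $ j1 + (\<Sum>k\<in>A. (snd z $ j1 \<bullet> \<kappa> k) *\<^sub>R (snd z $ k - \<kappa> k))
                 else snd z $ j)"

lemma differentiable_slope_chart: "slope_chart A j1 \<kappa> differentiable_on S"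
proof -
  have "(\<lambda>z. if j = j1
             then snd z $ j1 + (\<Sum>k\<in>A. (snd z $ j1 \<bullet> \<kappa> k) *\<^sub>R (snd z $ k - \<kappa> k))
             else snd z $ j) differentiable (at z within S)" for j z
    by (cases "j = j1")
      (auto intro!: differentiable_add differentiable_diff differentiable_inner differentiable_sum
        differentiable_scaleR differentiable_snd_nth)
  then show ?thesis
    unfolding differentiable_on_def slope_chart_def
    by (auto intro!: differentiable_Pair differentiable_vec_lambda
        bounded_linear_imp_differentiable[OF bounded_linear_fst])
qed

lemma projected_slopes_dependent_subset_slope_chart_image:
  fixes \<kappa> :: "'m::finite \<Rightarrow> real^'n::finite"
  assumes "j1 \<in> A" "y0 \<in> T"
    and "\<And>j k. j \<in> A - {j1} \<Longrightarrow> k \<in> A - {j1} \<Longrightarrow> \<kappa> j \<bullet> \<kappa> k = (if j = k then 1 else 0)"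
    and "\<And>u k. (\<And>y. y \<in> T \<Longrightarrow> u \<bullet> (y - y0) = 0) \<Longrightarrow> k \<in> A - {j1} \<Longrightarrow> u \<bullet> \<kappa> k = 0"
  shows "projected_slopes_dependent T A j1
           \<subseteq> slope_chart (A - {j1}) j1 \<kappa> ` {z. (\<Sum>k\<in>A - {j1}. \<kappa> k) \<bullet> snd z $ j1 = 1}"
proof
  fix z
  assume "z \<in> projected_slopes_dependent T A j1"
  then have "(fst z, snd z) \<in> projected_slopes_dependent T A j1"
    by simp
  then obtain v where v: "(\<Sum>k\<in>A - {j1}. \<kappa> k) \<bullet> v = 1"
    "v + (\<Sum>k\<in>A - {j1}. (v \<bullet> \<kappa> k) *\<^sub>R (snd z $ k - \<kappa> k)) = snd z $ j1"
    using projected_slopes_dependent_reparametrized[OF _ assms] by blast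
  define cb' where "cb' = (\<chi> j. if j = j1 then v else snd z $ j)"
  have "(\<Sum>k\<in>A - {j1}. (v \<bullet> \<kappa> k) *\<^sub>R (cb' $ k - \<kappa> k))
      = (\<Sum>k\<in>A - {j1}. (v \<bullet> \<kappa> k) *\<^sub>R (snd z $ k - \<kappa> k))"
    by (intro sum.cong) (auto simp: cb'_def)
  then have "slope_chart (A - {j1}) j1 \<kappa> (fst z, cb') = z"
    using v(2) by (simp add: slope_chart_def cb'_def prod_eq_iff vec_eq_iff)
  moreover have "(\<Sum>k\<in>A - {j1}. \<kappa> k) \<bullet> cb' $ j1 = 1"
    using v(1) by (simp add: cb'_def)
  ultimately show "z \<in> slope_chart (A - {j1}) j1 \<kappa> ` {z. (\<Sum>k\<in>A - {j1}. \<kappa> k) \<bullet> snd z $ j1 = 1}"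
    by (intro rev_image_eqI[of "(fst z, cb')"]) auto
qed

lemma negligible_projected_slopes_dependent:
  fixes T :: "(real^'n::finite) set" and A :: "'m::finite set"
  assumes "\<not> affine_dependent T" "card A \<le> card T" "j1 \<in> A"
  shows "negligible (projected_slopes_dependent T A j1)"
proof (cases "A = {j1}")
  case True
  then have "projected_slopes_dependent T A j1 = {}"
    by (auto simp: projected_slopes_dependent_def)
  then show ?thesis
    by simp
next
  case False
  have "card A > 0"
    using assms(3) by (auto simp: card_gt_0_iff)
  then have card_lt: "card (A - {j1}) < card T"
    using assms(2,3) by (simp add: card_Diff_singleton)
  then obtain y0 where "y0 \<in> T"
    by fastforce
  obtain \<kappa> :: "'m \<Rightarrow> real^'n"
    where orthonormal: "\<And>j k. j \<in> A - {j1} \<Longrightarrow> k \<in> A - {j1} \<Longrightarrow> \<kappa> j \<bullet> \<kappa> k = (if j = k then 1 else 0)"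
      and normal: "\<And>u k. (\<And>y. y \<in> T \<Longrightarrow> u \<bullet> (y - y0) = 0) \<Longrightarrow> k \<in> A - {j1} \<Longrightarrow> u \<bullet> \<kappa> k = 0"
    using affine_independent_orthonormal_directions[OF assms(1) \<open>y0 \<in> T\<close> finite card_lt] by blast
  define e where "e = (\<Sum>k\<in>A - {j1}. \<kappa> k)"
  define a :: "(real^'m) \<times> (real^'n^'m)" where "a = (0, axis j1 e)"
  have a_inner: "a \<bullet> z = e \<bullet> snd z $ j1" for z
    by (simp add: a_def inner_prod_def inner_axis')
  have "e \<bullet> e = card (A - {j1})"
    using orthonormal by (simp add: e_def inner_sum_left inner_sum_right)
  moreover have "A - {j1} \<noteq> {}"
    using False assms(3) by auto
  ultimately have "e \<noteq> 0"
    by auto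
  then have "a \<noteq> 0"
    by (metis a_def axis_nth snd_conv snd_zero zero_index)
  moreover have "slope_chart (A - {j1}) j1 \<kappa> differentiable_on {z. a \<bullet> z = 1}"
    by (rule differentiable_slope_chart)
  moreover have "projected_slopes_dependent T A j1 \<subseteq> slope_chart (A - {j1}) j1 \<kappa> ` {z. a \<bullet> z = 1}"
    using projected_slopes_dependent_subset_slope_chart_image[OF assms(3) \<open>y0 \<in> T\<close> orthonormal normal]
    by (simp add: a_inner e_def)
  ultimately show ?thesis
    by (rule negligible_subset_differentiable_image_hyperplane)
qed

definition degenerate_scenarios :: "(real^'n::finite) set \<Rightarrow> ((real^'m::finite) \<times> (real^'n^'m)) set" where
  "degenerate_scenarios K =
     (\<Union>T\<in>Pow K. \<Union>I\<in>{I. card T \<le> card I}. \<Union>j0\<in>- I. scenarios_tie_on_affine_hull T I j0) \<union>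
     (\<Union>T\<in>{T\<in>Pow K. \<not> affine_dependent T}. \<Union>A\<in>{A. card A \<le> card T}. \<Union>j1\<in>A.
        projected_slopes_dependent T A j1)"

lemma negligible_degenerate_scenarios:
  fixes K :: "(real^'n::finite) set"
  assumes "finite K"
  shows "negligible (degenerate_scenarios K :: ((real^'m::finite) \<times> (real^'n^'m)) set)"
proof -
  have "finite T" if "T \<in> Pow K" for T
    using assms that finite_subset by blast
  then show ?thesis
    using assms unfolding degenerate_scenarios_def
    by (intro negligible_Un negligible_Union finite_imageI)
      (auto intro!: negligible_Union finite_imageI negligible_scenarios_tie_on_affine_hull
        negligible_projected_slopes_dependent)
qed

section \<open>Algorithm SD\<close>

lemma card_active_scenarios_le:
  assumes "(ct, cb) \<notin> degenerate_scenarios K" "T \<subseteq> K" "x \<in> affine hull T"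
  shows "card (active_scenarios ct cb x) \<le> card T"
proof (rule ccontr)
  let ?A = "active_scenarios ct cb x"
  assume "\<not> card ?A \<le> card T"
  then have "?A \<noteq> {}"
    by auto
  then obtain j0 where "j0 \<in> ?A"
    by blast
  then have "card T \<le> card (?A - {j0})"
    using \<open>\<not> card ?A \<le> card T\<close> by (simp add: card_Diff_singleton)
  moreover have "(ct, cb) \<in> scenarios_tie_on_affine_hull T (?A - {j0}) j0"
    using assms(3) \<open>j0 \<in> ?A\<close>
    by (auto simp: scenarios_tie_on_affine_hull_def active_scenarios_def intro!: bexI[of _ x])
  ultimately have "(ct, cb) \<in> degenerate_scenarios K"
    using assms(2) unfolding degenerate_scenarios_def
    by (intro UnI1 UN_I[of T] UN_I[of "?A - {j0}"] UN_I[of j0]) auto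
  with assms(1) show False ..
qed

lemma sd_set_orthogonal:
  assumes "g \<in> sd_set ct cb V x" "T \<subseteq> V" "finite T" "\<forall>y\<in>T. 0 < u y" "sum u T = 1"
    "(\<Sum>y\<in>T. u y *\<^sub>R y) = x" "y \<in> T" "y' \<in> T"
  shows "g \<bullet> (y - y') = 0"
proof -
  obtain d where d: "d \<in> normal_cone (convex hull V) x" "g = - d"
    using assms(1) by (auto simp: sd_set_def)
  have "T \<subseteq> convex hull V"
    by (rule subset_trans[OF assms(2) hull_subset])
  then have "d \<bullet> (y - x) = 0" "d \<bullet> (y' - x) = 0"
    using normal_cone_orthogonal_positive_combination[OF d(1) _ assms(3-6)] assms(7,8) by auto
  then show ?thesis
    using d(2) by (simp add: inner_diff_right)
qed

lemma sd_set_unique: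
  assumes "(ct, cb) \<notin> degenerate_scenarios K" "V \<subseteq> K" "finite V" "x \<in> convex hull V"
    and "g1 \<in> sd_set ct cb V x" "g2 \<in> sd_set ct cb V x"
  shows "g1 = g2"
proof (rule ccontr)
  assume "g1 \<noteq> g2"
  let ?A = "active_scenarios ct cb x"
  obtain T u where T: "T \<subseteq> V" "\<not> affine_dependent T" "\<forall>y\<in>T. 0 < u y" "sum u T = 1"
      "(\<Sum>y\<in>T. u y *\<^sub>R y) = x"
    using convex_hull_affine_independent_representation[OF assms(3,4)] by blast
  have "finite T"
    using T(2) aff_independent_finite by blast
  then have "x \<in> affine hull T"
    using T(4,5) by (auto simp: affine_hull_finite)
  then have "card ?A \<le> card T"
    using card_active_scenarios_le[OF assms(1)] T(1) assms(2) by blast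
  have hull: "g1 \<in> convex hull ((\<lambda>j. cb $ j) ` ?A)" "g2 \<in> convex hull ((\<lambda>j. cb $ j) ` ?A)"
    using assms(5,6) subdiff_maxfun_subset by (auto simp: sd_set_def)
  obtain l1 where l1: "\<forall>j\<in>?A. 0 \<le> l1 j" "sum l1 ?A = 1" "(\<Sum>j\<in>?A. l1 j *\<^sub>R cb $ j) = g1"
    using convex_hull_image_weights[OF finite hull(1)] by blast
  obtain l2 where l2: "\<forall>j\<in>?A. 0 \<le> l2 j" "sum l2 ?A = 1" "(\<Sum>j\<in>?A. l2 j *\<^sub>R cb $ j) = g2"
    using convex_hull_image_weights[OF finite hull(2)] by blast
  have "\<exists>j1\<in>?A. l1 j1 \<noteq> l2 j1"
  proof (rule ccontr)
    assume "\<not> (\<exists>j1\<in>?A. l1 j1 \<noteq> l2 j1)"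
    then have "(\<Sum>j\<in>?A. l1 j *\<^sub>R cb $ j) = (\<Sum>j\<in>?A. l2 j *\<^sub>R cb $ j)"
      by (intro sum.cong) auto
    with l1(3) l2(3) \<open>g1 \<noteq> g2\<close> show False
      by simp
  qed
  then obtain j1 where "j1 \<in> ?A" "l1 j1 \<noteq> l2 j1"
    by blast
  then have "(ct, cb) \<in> projected_slopes_dependent T ?A j1"
    using l1(2,3) l2(2,3) sd_set_orthogonal[OF assms(5) T(1) \<open>finite T\<close> T(3-5)]
      sd_set_orthogonal[OF assms(6) T(1) \<open>finite T\<close> T(3-5)]
    unfolding projected_slopes_dependent_def
    by (intro CollectI case_prodI exI[of _ "\<lambda>j. l1 j - l2 j"])
      (auto simp: sum_subtractf scaleR_diff_left inner_diff_left)
  then have "(ct, cb) \<in> degenerate_scenarios K"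
    using T(1,2) assms(2) \<open>card ?A \<le> card T\<close> \<open>j1 \<in> ?A\<close> unfolding degenerate_scenarios_def
    by (intro UnI2 UN_I[of T] UN_I[of ?A] UN_I[of j1]) auto
  with assms(1) show False ..
qed

lemma sd_run_vertices_subset:
  assumes "sd_run ct cb X N V x c xh" "k \<in> {1..N}"
  shows "V k \<subseteq> X"
proof -
  have "1 \<le> k" "k \<le> N"
    using assms(2) by auto
  then show ?thesis
  proof (induction k rule: nat_induct_at_least)
    case base
    then show ?case
      using assms(1) by (simp add: sd_run_def)
  next
    case (Suc k)
    then have "V (Suc k) = insert (xh k) (V k)" "xh k \<in> X"
      using assms(1) by (auto simp: sd_run_def)
    with Suc show ?case
      by simp
  qed
qed

lemma sd_run_sd_set_singleton:
  assumes "(ct, cb) \<notin> degenerate_scenarios X" "finite X" "sd_run ct cb X N V x c xh" "k \<in> {1..N}"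
  shows "\<exists>g. sd_set ct cb (V k) (x k) = {g}"
proof -
  have "V k \<subseteq> X"
    using sd_run_vertices_subset[OF assms(3,4)] .
  moreover have "x k \<in> convex hull V k" "c k \<in> sd_set ct cb (V k) (x k)"
    using assms(3,4) by (auto simp: sd_run_def)
  ultimately have "sd_set ct cb (V k) (x k) = {c k}"
    using sd_set_unique[OF assms(1)] assms(2) finite_subset by blast
  then show ?thesis ..
qed

lemma finite_binary_vectors: "finite {x :: real^'n::finite. \<forall>i. x $ i = 0 \<or> x $ i = 1}"
proof -
  have "vec_nth ` {x :: real^'n. \<forall>i. x $ i = 0 \<or> x $ i = 1} \<subseteq> UNIV \<rightarrow>\<^sub>E {0, 1}"
    by auto
  then have "finite (vec_nth ` {x :: real^'n. \<forall>i. x $ i = 0 \<or> x $ i = 1})"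
    by (rule finite_subset) (intro finite_PiE; simp)
  then show ?thesis
    by (rule finite_imageD) (simp add: inj_on_def vec_nth_inject)
qed

theorem theorem2:
  fixes X :: "(real^'n::finite) set"
    and ct0 :: "real^'m::finite" and cb0 :: "real^'n^'m"
    and P :: "((real^'m) \<times> (real^'n^'m)) measure"
  assumes "X \<noteq> {}"
    and "X \<subseteq> {x. \<forall>i. x $ i = 0 \<or> x $ i = 1}"
    and "prob_space P"
    and "sets P = sets borel"
    and "absolutely_continuous lborel P"
  shows "AE y in P.
           (let ct = ct0 + fst y; cb = cb0 + snd y in
            \<forall>N V x c xh. sd_run ct cb X N V x c xh \<longrightarrow>
              (\<forall>k\<in>{1..N}. \<exists>g. sd_set ct cb (V k) (x k) = {g}))"
proof -
  have "finite X"
    using assms(2) finite_binary_vectors finite_subset by blast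
  have "AE y in P. (ct0, cb0) + y \<notin> degenerate_scenarios X"
    using assms(5) negligible_degenerate_scenarios[OF \<open>finite X\<close>]
    by (rule AE_translate_not_in_negligible)
  then show ?thesis
    by (rule eventually_mono)
      (auto simp: Let_def plus_prod_def intro: sd_run_sd_set_singleton[OF _ \<open>finite X\<close>])
qed

end
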